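(* Let $\preceq$ be a topological orientation on $\mathbb{R}$ (with the metric $d(x,y)=|x-y|$) such that $x\preceq y$ implies $x\le y$. Assume every left-bounded pair for $\preceq$ has a meet in $\mathbb{R}$. Then $(\mathbb{R},\preceq)$ is a cc sponge.
   Context: An orientation is a reflexive, antisymmetric binary relation; it is topological if it is a closed subset of $\mathbb{R}\times\mathbb{R}$. A set $P$ is left-bounded if some $s$ satisfies $s\preceq p$ for all $p\in P$, right-bounded if some $s$ satisfies $p\preceq s$ for all $p\in P$. The meet of $P$ is an $x$ with $x\preceq p$ for all $p\in P$ and $y\preceq x$ for every $y$ with $y\preceq p$ for all $p\in P$; the join is dual. $(\mathbb{R},\preceq)$ is a cc sponge if every nonempty right-bounded subset has a join. *)

theory Defs
  imports "HOL-Analysis.Analysis"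
begin

definition orientation :: "('a \<Rightarrow> 'a \<Rightarrow> bool) \<Rightarrow> bool" where
  "orientation R \<longleftrightarrow> (\<forall>x. R x x) \<and> (\<forall>x y. R x y \<and> R y x \<longrightarrow> x = y)"

definition topological_orientation :: "(real \<Rightarrow> real \<Rightarrow> bool) \<Rightarrow> bool" where
  "topological_orientation R \<longleftrightarrow> orientation R \<and> closed {(x, y). R x y}"

definition left_bounded :: "('a \<Rightarrow> 'a \<Rightarrow> bool) \<Rightarrow> 'a set \<Rightarrow> bool" where
  "left_bounded R P \<longleftrightarrow> (\<exists>s. \<forall>p\<in>P. R s p)"

definition right_bounded :: "('a \<Rightarrow> 'a \<Rightarrow> bool) \<Rightarrow> 'a set \<Rightarrow> bool" where
  "right_bounded R P \<longleftrightarrow> (\<exists>s. \<forall>p\<in>P. R p s)"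

definition is_meet :: "('a \<Rightarrow> 'a \<Rightarrow> bool) \<Rightarrow> 'a set \<Rightarrow> 'a \<Rightarrow> bool" where
  "is_meet R P x \<longleftrightarrow> (\<forall>p\<in>P. R x p) \<and> (\<forall>y. (\<forall>p\<in>P. R y p) \<longrightarrow> R y x)"

definition is_join :: "('a \<Rightarrow> 'a \<Rightarrow> bool) \<Rightarrow> 'a set \<Rightarrow> 'a \<Rightarrow> bool" where
  "is_join R P x \<longleftrightarrow> (\<forall>p\<in>P. R p x) \<and> (\<forall>y. (\<forall>p\<in>P. R p y) \<longrightarrow> R x y)"

definition cc_sponge :: "('a \<Rightarrow> 'a \<Rightarrow> bool) \<Rightarrow> bool" where
  "cc_sponge R \<longleftrightarrow> (\<forall>P. P \<noteq> {} \<and> right_bounded R P \<longrightarrow> (\<exists>x. is_join R P x))"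

end

theory Submission
  imports Defs
begin

text \<open>The set \<open>U\<close> of upper bounds of \<open>P\<close> is closed, because the graph of the orientation is,
  and it is bounded below in the usual order by any element of \<open>P\<close>; so it contains its infimum
  \<open>u\<close>. Given any upper bound \<open>y\<close>, the pair \<open>{u, y}\<close> is left-bounded by an element of \<open>P\<close>, so it
  has a meet \<open>m\<close>. This meet is again an upper bound of \<open>P\<close> with \<open>m \<le> u\<close>, hence \<open>m = u\<close> by
  minimality of \<open>u\<close>, i.e. \<open>u\<close> precedes \<open>y\<close>.\<close>

lemma closed_upper_section:
  fixes R :: "'a::topological_space \<Rightarrow> 'a \<Rightarrow> bool"
  assumes "closed {(x, y). R x y}"
  shows "closed {y. R p y}"
proof -
  have "closed (Pair p -` {(x, y). R x y})"
    using assms by (rule closed_vimage) (intro continuous_intros)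
  then show ?thesis by simp
qed

lemma closed_upper_bounds:
  fixes R :: "'a::topological_space \<Rightarrow> 'a \<Rightarrow> bool"
  assumes "closed {(x, y). R x y}"
  shows "closed {y. \<forall>p\<in>P. R p y}"
proof -
  have "{y. \<forall>p\<in>P. R p y} = (\<Inter>p\<in>P. {y. R p y})" by auto
  then show ?thesis using closed_upper_section[OF assms] by auto
qed

lemma is_join_if_least_upper_bound:
  fixes R :: "'a::order \<Rightarrow> 'a \<Rightarrow> bool"
  assumes below: "\<And>x y. R x y \<Longrightarrow> x \<le> y"
    and pair_meets: "\<And>a b. left_bounded R {a, b} \<Longrightarrow> \<exists>m. is_meet R {a, b} m"
    and "p0 \<in> P"
    and upper: "\<forall>p\<in>P. R p u"
    and least: "\<And>y. \<forall>p\<in>P. R p y \<Longrightarrow> u \<le> y"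
  shows "is_join R P u"
  unfolding is_join_def
proof (intro conjI allI impI upper)
  fix y assume y: "\<forall>p\<in>P. R p y"
  have "left_bounded R {u, y}"
    unfolding left_bounded_def using \<open>p0 \<in> P\<close> upper y by auto
  then obtain m where m: "is_meet R {u, y} m" using pair_meets by blast
  have "\<forall>p\<in>P. R p m" using m upper y unfolding is_meet_def by auto
  then have "u \<le> m" by (rule least)
  moreover have "m \<le> u" using m below unfolding is_meet_def by auto
  ultimately have "m = u" by simp
  then show "R u y" using m unfolding is_meet_def by auto
qed

theorem mainTheorem5:
  fixes R :: "real \<Rightarrow> real \<Rightarrow> bool"
  assumes "topological_orientation R"
    and "\<And>x y. R x y \<Longrightarrow> x \<le> y"
    and "\<And>a b. left_bounded R {a, b} \<Longrightarrow> \<exists>m. is_meet R {a, b} m"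
  shows "cc_sponge R"
  unfolding cc_sponge_def
proof (intro allI impI)
  fix P assume "P \<noteq> {} \<and> right_bounded R P"
  then obtain p0 s where "p0 \<in> P" and "\<forall>p\<in>P. R p s"
    unfolding right_bounded_def by auto
  define U where "U = {y. \<forall>p\<in>P. R p y}"
  have "closed U"
    unfolding U_def using assms(1) closed_upper_bounds
    unfolding topological_orientation_def by blast
  moreover have "U \<noteq> {}" using \<open>\<forall>p\<in>P. R p s\<close> unfolding U_def by auto
  moreover have bdd: "bdd_below U"
    unfolding bdd_below_def U_def using \<open>p0 \<in> P\<close> assms(2) by blast
  ultimately have "Inf U \<in> U" by (simp add: closed_contains_Inf)
  have "is_join R P (Inf U)"
  proof (rule is_join_if_least_upper_bound[OF assms(2,3) \<open>p0 \<in> P\<close>])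
    show "\<forall>p\<in>P. R p (Inf U)" using \<open>Inf U \<in> U\<close> unfolding U_def by auto
    show "Inf U \<le> y" if "\<forall>p\<in>P. R p y" for y
      using that bdd by (simp add: U_def cInf_lower)
  qed
  then show "\<exists>x. is_join R P x" ..
qed

end
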